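(* Let $L$ be a finite connected simplicial complex of dimension $2$ (having at least one $2$-simplex) in which every edge is a face of at least two $2$-simplices, and suppose $\chi(L)\le 2$. Then $L$ has at least $\rho(\chi(L))$ vertices and at least $2\alpha_0(L)-2\chi(L)$ two-simplices, where $\alpha_0(L)$ is the number of vertices of $L$.
   Context: For an integer $k\le 2$, $\rho(k)=\left\lceil \frac{7+\sqrt{49-24k}}{2}\right\rceil$. $\alpha_i(L)$ denotes the number of $i$-simplices of $L$ and $\chi$ the Euler characteristic. *)

theory Defs
  imports Complex_Main
begin

definition simplicial_complex :: "'a set set \<Rightarrow> bool" where
  "simplicial_complex K \<longleftrightarrow> finite K \<and> (\<forall>\<sigma>\<in>K. finite \<sigma> \<and> \<sigma> \<noteq> {}) \<and>
     (\<forall>\<sigma>\<in>K. \<forall>\<tau>. \<tau> \<subseteq> \<sigma> \<and> \<tau> \<noteq> {} \<longrightarrow> \<tau> \<in> K)"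

definition simplices :: "'a set set \<Rightarrow> nat \<Rightarrow> 'a set set" where
  "simplices K i = {\<sigma>\<in>K. card \<sigma> = Suc i}"

definition alpha :: "'a set set \<Rightarrow> nat \<Rightarrow> nat" where
  "alpha K i = card (simplices K i)"

definition dim_complex :: "'a set set \<Rightarrow> nat" where
  "dim_complex K = Max ((\<lambda>\<sigma>. card \<sigma> - 1) ` K)"

definition euler_char :: "'a set set \<Rightarrow> int" where
  "euler_char K = (\<Sum>\<sigma>\<in>K. (-1) ^ (card \<sigma> - 1))"

definition vertices :: "'a set set \<Rightarrow> 'a set" where
  "vertices K = {v. {v} \<in> K}"

definition connected_complex :: "'a set set \<Rightarrow> bool" where
  "connected_complex K \<longleftrightarrow> vertices K \<noteq> {} \<and>
     (\<forall>u\<in>vertices K. \<forall>v\<in>vertices K. (u, v) \<in> {(x, y). {x, y} \<in> K}\<^sup>*)"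

definition rho :: "int \<Rightarrow> int" where
  "rho k = \<lceil>(7 + sqrt (49 - 24 * real_of_int k)) / 2\<rceil>"

end

theory Submission
  imports Defs
begin

text \<open>Each triangle has three edges and each edge lies in at least two triangles, so double
counting gives \<open>2\<alpha>\<^sub>1 \<le> 3\<alpha>\<^sub>2\<close>; with \<open>\<chi> = \<alpha>\<^sub>0 - \<alpha>\<^sub>1 + \<alpha>\<^sub>2\<close> this is the bound on \<open>\<alpha>\<^sub>2\<close>, and it
also gives \<open>\<alpha>\<^sub>1 \<ge> 3(\<alpha>\<^sub>0 - \<chi>)\<close>. Together with \<open>2\<alpha>\<^sub>1 \<le> \<alpha>\<^sub>0(\<alpha>\<^sub>0 - 1)\<close> this yields
\<open>\<alpha>\<^sub>0\<^sup>2 - 7\<alpha>\<^sub>0 + 6\<chi> \<ge> 0\<close>, and since two triangles sharing an edge span four vertices,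
\<open>\<alpha>\<^sub>0 \<ge> 4\<close> places \<open>\<alpha>\<^sub>0\<close> beyond the larger root \<open>(7 + \<surd>(49 - 24\<chi>))/2\<close>.\<close>

lemma
  assumes "simplicial_complex K"
  shows simplicial_complex_finite: "finite K"
    and simplicial_complex_finite_simplex: "\<sigma> \<in> K \<Longrightarrow> finite \<sigma>"
    and simplicial_complex_nonempty_simplex: "\<sigma> \<in> K \<Longrightarrow> \<sigma> \<noteq> {}"
    and simplicial_complex_face: "\<sigma> \<in> K \<Longrightarrow> \<tau> \<subseteq> \<sigma> \<Longrightarrow> \<tau> \<noteq> {} \<Longrightarrow> \<tau> \<in> K"
  using assms unfolding simplicial_complex_def by blast+

lemma simplex_subset_vertices:
  assumes "simplicial_complex K" and "\<sigma> \<in> K"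
  shows "\<sigma> \<subseteq> vertices K"
  using simplicial_complex_face[OF assms] unfolding vertices_def by blast

lemma finite_vertices:
  assumes "simplicial_complex K"
  shows "finite (vertices K)"
proof -
  have "vertices K \<subseteq> \<Union>K" unfolding vertices_def by blast
  then show ?thesis
    using assms simplicial_complex_finite simplicial_complex_finite_simplex
    by (meson finite_Union finite_subset)
qed

lemma finite_simplices:
  assumes "simplicial_complex K"
  shows "finite (simplices K i)"
  using simplicial_complex_finite[OF assms] unfolding simplices_def by simp

lemma alpha_0_eq_card_vertices: "alpha K 0 = card (vertices K)"
proof -
  have "simplices K 0 = (\<lambda>v. {v}) ` vertices K"
    unfolding simplices_def vertices_def by (auto simp: card_Suc_eq)
  then show ?thesis
    unfolding alpha_def by (simp add: card_image)
qed

lemma alpha_le_choose: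
  assumes "simplicial_complex K"
  shows "alpha K i \<le> alpha K 0 choose Suc i"
proof -
  have "simplices K i \<subseteq> {B. B \<subseteq> vertices K \<and> card B = Suc i}"
    using simplex_subset_vertices[OF assms] unfolding simplices_def by auto
  then have "alpha K i \<le> card {B. B \<subseteq> vertices K \<and> card B = Suc i}"
    unfolding alpha_def using finite_vertices[OF assms] by (intro card_mono) auto
  then show ?thesis
    using finite_vertices[OF assms] by (simp add: n_subsets alpha_0_eq_card_vertices)
qed

lemma two_mul_alpha_1_le:
  assumes "simplicial_complex K"
  shows "2 * int (alpha K 1) \<le> int (alpha K 0) * (int (alpha K 0) - 1)"
proof -
  have "alpha K 1 \<le> alpha K 0 choose 2"
    using alpha_le_choose[OF assms, of 1] unfolding Suc_1 .
  moreover have "2 * (alpha K 0 choose 2) = alpha K 0 * (alpha K 0 - 1)"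
    unfolding choose_two by (intro dvd_mult_div_cancel) auto
  ultimately have "int (2 * alpha K 1) \<le> int (alpha K 0 * (alpha K 0 - 1))"
    by (simp only: of_nat_le_iff)
  then show ?thesis
    by (cases "alpha K 0 = 0") (simp_all add: of_nat_diff)
qed

lemma card_simplex_le_Suc_dim:
  assumes "simplicial_complex K" and "\<sigma> \<in> K"
  shows "card \<sigma> \<le> Suc (dim_complex K)"
proof -
  have "card \<sigma> - 1 \<le> dim_complex K"
    using simplicial_complex_finite[OF assms(1)] assms(2) unfolding dim_complex_def by simp
  then show ?thesis by linarith
qed

lemma ex_simplex_of_dim:
  assumes "simplicial_complex K" and "K \<noteq> {}"
  obtains \<sigma> where "\<sigma> \<in> K" and "card \<sigma> = Suc (dim_complex K)"
proof -
  have "dim_complex K \<in> (\<lambda>\<sigma>. card \<sigma> - 1) ` K"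
    unfolding dim_complex_def using simplicial_complex_finite[OF assms(1)] assms(2)
    by (intro Max_in) auto
  then obtain \<sigma> where "\<sigma> \<in> K" and "dim_complex K = card \<sigma> - 1" by (rule imageE)
  moreover have "card \<sigma> \<noteq> 0"
    using simplicial_complex_finite_simplex[OF assms(1) \<open>\<sigma> \<in> K\<close>]
      simplicial_complex_nonempty_simplex[OF assms(1) \<open>\<sigma> \<in> K\<close>]
    by simp
  ultimately show thesis using that by simp
qed

lemma euler_char_eq_sum_alpha:
  assumes "simplicial_complex K"
  shows "euler_char K = (\<Sum>i\<le>dim_complex K. (-1) ^ i * int (alpha K i))"
proof -
  have dims: "(\<lambda>\<sigma>. card \<sigma> - 1) ` K \<subseteq> {..dim_complex K}"
    using card_simplex_le_Suc_dim[OF assms] by (auto simp: le_diff_conv)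
  have nonzero: "card \<sigma> \<noteq> 0" if "\<sigma> \<in> K" for \<sigma>
    using simplicial_complex_finite_simplex[OF assms that]
      simplicial_complex_nonempty_simplex[OF assms that] by simp
  have layer: "{\<sigma>\<in>K. card \<sigma> - 1 = i} = simplices K i" for i
    unfolding simplices_def using nonzero by force
  have "euler_char K = (\<Sum>i\<le>dim_complex K. \<Sum>\<sigma>\<in>{\<sigma>\<in>K. card \<sigma> - 1 = i}. (-1) ^ (card \<sigma> - 1))"
    unfolding euler_char_def using simplicial_complex_finite[OF assms] dims
    by (intro sum.group[symmetric]) auto
  also have "\<dots> = (\<Sum>i\<le>dim_complex K. \<Sum>\<sigma>\<in>simplices K i. (-1) ^ i)"
    unfolding layer by (intro sum.cong refl) (simp add: simplices_def)
  finally show ?thesis by (simp add: alpha_def mult.commute)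
qed

lemma card_faces_of_simplex:
  assumes "simplicial_complex K" and "\<tau> \<in> simplices K (Suc i)"
  shows "card {\<sigma>\<in>simplices K i. \<sigma> \<subseteq> \<tau>} = i + 2"
proof -
  have \<tau>: "\<tau> \<in> K" "card \<tau> = i + 2"
    using assms(2) unfolding simplices_def by auto
  have "{\<sigma>\<in>simplices K i. \<sigma> \<subseteq> \<tau>} = {B. B \<subseteq> \<tau> \<and> card B = Suc i}"
    using simplicial_complex_face[OF assms(1) \<tau>(1)] unfolding simplices_def
    by auto (metis card.empty nat.distinct(1))
  then show ?thesis
    using \<tau> simplicial_complex_finite_simplex[OF assms(1)] by (simp add: n_subsets)
qed

lemma sum_card_cofaces:
  assumes "simplicial_complex K"
  shows "(\<Sum>\<sigma>\<in>simplices K i. card {\<tau>\<in>simplices K (Suc i). \<sigma> \<subseteq> \<tau>}) = (i + 2) * alpha K (Suc i)"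
proof -
  have count: "card {x\<in>A. P x} = (\<Sum>x\<in>A. of_bool (P x))" if "finite A" for A :: "'a set set" and P
    using that by (simp add: Int_def)
  have "(\<Sum>\<sigma>\<in>simplices K i. card {\<tau>\<in>simplices K (Suc i). \<sigma> \<subseteq> \<tau>})
      = (\<Sum>\<sigma>\<in>simplices K i. \<Sum>\<tau>\<in>simplices K (Suc i). of_bool (\<sigma> \<subseteq> \<tau>))"
    using finite_simplices[OF assms] by (simp only: count)
  also have "\<dots> = (\<Sum>\<tau>\<in>simplices K (Suc i). \<Sum>\<sigma>\<in>simplices K i. of_bool (\<sigma> \<subseteq> \<tau>))"
    by (rule sum.swap)
  also have "\<dots> = (\<Sum>\<tau>\<in>simplices K (Suc i). card {\<sigma>\<in>simplices K i. \<sigma> \<subseteq> \<tau>})"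
    using finite_simplices[OF assms] by (simp only: count)
  also have "\<dots> = (i + 2) * alpha K (Suc i)"
    using card_faces_of_simplex[OF assms] by (simp add: alpha_def)
  finally show ?thesis .
qed

lemma two_mul_alpha_le_of_two_cofaces:
  assumes "simplicial_complex K"
    and "\<forall>\<sigma>\<in>simplices K i. 2 \<le> card {\<tau>\<in>simplices K (Suc i). \<sigma> \<subseteq> \<tau>}"
  shows "2 * alpha K i \<le> (i + 2) * alpha K (Suc i)"
proof -
  have "2 * alpha K i = (\<Sum>\<sigma>\<in>simplices K i. 2)"
    by (simp add: alpha_def)
  also have "\<dots> \<le> (\<Sum>\<sigma>\<in>simplices K i. card {\<tau>\<in>simplices K (Suc i). \<sigma> \<subseteq> \<tau>})"
    using assms(2) by (intro sum_mono) blast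
  also have "\<dots> = (i + 2) * alpha K (Suc i)"
    using sum_card_cofaces[OF assms(1)] .
  finally show ?thesis .
qed

lemma alpha_0_gt_of_two_cofaces:
  assumes K: "simplicial_complex K"
    and two_cofaces: "\<forall>\<sigma>\<in>simplices K i. 2 \<le> card {\<tau>\<in>simplices K (Suc i). \<sigma> \<subseteq> \<tau>}"
    and \<tau>: "\<tau> \<in> simplices K (Suc i)"
  shows "i + 2 < alpha K 0"
proof -
  have "{\<sigma>\<in>simplices K i. \<sigma> \<subseteq> \<tau>} \<noteq> {}"
    using card_faces_of_simplex[OF K \<tau>] by force
  then obtain \<sigma> where \<sigma>: "\<sigma> \<in> simplices K i" "\<sigma> \<subseteq> \<tau>" by blast
  define C where "C = {\<tau>\<in>simplices K (Suc i). \<sigma> \<subseteq> \<tau>}"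
  have "\<not> C \<subseteq> {\<tau>}"
  proof
    assume "C \<subseteq> {\<tau>}"
    then have "card C \<le> 1"
      using card_mono[of "{\<tau>}" C] by simp
    with two_cofaces \<sigma>(1) show False
      unfolding C_def by fastforce
  qed
  then obtain \<tau>' where \<tau>': "\<tau>' \<in> simplices K (Suc i)" "\<tau>' \<noteq> \<tau>"
    unfolding C_def by blast
  have "\<not> \<tau>' \<subseteq> \<tau>"
  proof
    assume "\<tau>' \<subseteq> \<tau>"
    moreover have "card \<tau>' = card \<tau>" "finite \<tau>"
      using \<tau> \<tau>' simplicial_complex_finite_simplex[OF K] unfolding simplices_def by auto
    ultimately show False
      using \<tau>'(2) card_subset_eq by blast
  qed
  then have "\<tau> \<subset> \<tau> \<union> \<tau>'" by blast
  moreover have "\<tau> \<union> \<tau>' \<subseteq> vertices K"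
    using \<tau> \<tau>' simplex_subset_vertices[OF K] unfolding simplices_def by blast
  ultimately have "card \<tau> < card (vertices K)"
    using finite_vertices[OF K] by (meson psubset_card_mono psubset_subset_trans)
  then show ?thesis
    using \<tau> by (simp add: simplices_def alpha_0_eq_card_vertices)
qed

lemma rho_le:
  fixes n k :: int
  assumes "4 \<le> n" and "0 \<le> n * n - 7 * n + 6 * k"
  shows "rho k \<le> n"
proof -
  have square: "(2 * n - 7)\<^sup>2 = (49 - 24 * k) + 4 * (n * n - 7 * n + 6 * k)"
    by (simp add: power2_eq_square algebra_simps)
  have "49 - 24 * k \<le> (2 * n - 7)\<^sup>2"
    unfolding square using assms(2) by simp
  then have "real_of_int (49 - 24 * k) \<le> real_of_int ((2 * n - 7)\<^sup>2)"
    by (simp only: of_int_le_iff)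
  then have "49 - 24 * real_of_int k \<le> (2 * real_of_int n - 7)\<^sup>2"
    by (simp only: of_int_diff of_int_mult of_int_power of_int_numeral)
  moreover have "0 \<le> 2 * real_of_int n - 7"
    using assms(1) by simp
  ultimately have "sqrt (49 - 24 * real_of_int k) \<le> 2 * real_of_int n - 7"
    by (intro real_le_lsqrt)
  then have "(7 + sqrt (49 - 24 * real_of_int k)) / 2 \<le> real_of_int n"
    by simp
  then show ?thesis
    by (simp only: rho_def ceiling_le_iff)
qed

theorem lemma3p2:
  fixes L :: "'a set set"
  assumes "simplicial_complex L"
    and "connected_complex L"
    and "dim_complex L = 2"
    and "\<forall>e\<in>simplices L 1. 2 \<le> card {t\<in>simplices L 2. e \<subseteq> t}"
    and "euler_char L \<le> 2"
  shows "int (alpha L 0) \<ge> rho (euler_char L)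
    \<and> int (alpha L 2) \<ge> 2 * int (alpha L 0) - 2 * euler_char L"
proof -
  \<comment> \<open>Connectedness is only used to make \<open>L\<close> nonempty.\<close>
  define n e f where "n = int (alpha L 0)" and "e = int (alpha L 1)" and "f = int (alpha L 2)"
  have two_cofaces: "\<forall>e\<in>simplices L 1. 2 \<le> card {t\<in>simplices L (Suc 1). e \<subseteq> t}"
    unfolding Suc_1 by (rule assms(4))
  have "L \<noteq> {}"
    using assms(2) unfolding connected_complex_def vertices_def by auto
  then obtain t where "t \<in> L" "card t = Suc 2"
    using ex_simplex_of_dim[OF assms(1)] assms(3) by metis
  then have "t \<in> simplices L (Suc 1)"
    unfolding simplices_def by simp
  from alpha_0_gt_of_two_cofaces[OF assms(1) two_cofaces this]
  have n_ge_4: "4 \<le> n" unfolding n_def by simp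
  have chi: "euler_char L = n - e + f"
    using euler_char_eq_sum_alpha[OF assms(1)] assms(3)
    by (simp add: n_def e_def f_def numeral_2_eq_2)
  have "2 * alpha L 1 \<le> (1 + 2) * alpha L (Suc 1)"
    by (rule two_mul_alpha_le_of_two_cofaces[OF assms(1) two_cofaces])
  then have edge_face: "2 * e \<le> 3 * f" unfolding e_def f_def Suc_1 by simp
  have "2 * e \<le> n * (n - 1)"
    using two_mul_alpha_1_le[OF assms(1)] unfolding n_def e_def .
  then have "0 \<le> n * n - 7 * n + 6 * euler_char L"
    using edge_face chi by (simp add: right_diff_distrib)
  then have "rho (euler_char L) \<le> n"
    by (rule rho_le[OF n_ge_4])
  then show ?thesis
    using edge_face chi unfolding n_def f_def by linarith
qed

end
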